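(* Let $V:\mathbb{R}\to\mathbb{R}$ be analytic at the origin. Suppose that (1) there exist a function $f$ of $u$ (independent of $m$) and constants $c_m$ (independent of $u$) such that for every non-negative integer $m$, $$V^{(2m+1)}\left(\frac{u}{2}\right)=c_m\,f(u),$$ where $V^{(2m+1)}$ denotes the $(2m+1)$-th derivative of $V$; and (2) the series $\sum_{m=0}^{\infty}\frac{c_m\,v^{2m+1}}{2^{2m}(2m+1)!}$ converges in some neighborhood of $v=0$. Then $V$ is separable, with divisors $$F(u)=f(u),\qquad G(v)=\sum_{m=0}^{\infty}\frac{c_m\,v^{2m+1}}{2^{2m}(2m+1)!},$$ i.e. $V\left(\frac{u+v}{2}\right)-V\left(\frac{u-v}{2}\right)=F(u)\,G(v)$.
   Context: A potential $V(q)$ is called separable if $V\left(\frac{u+v}{2}\right)-V\left(\frac{u-v}{2}\right)=F(u)\,G(v)$ where $F$ and $G$ are univariate functions of $u$ and $v$ respectively; $F$ and $G$ are called the divisors of $V$. *)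

theory Defs
  imports "HOL-Analysis.Analysis"
begin

definition real_analytic_at :: "(real \<Rightarrow> real) \<Rightarrow> real \<Rightarrow> bool" where
  "real_analytic_at V x0 \<longleftrightarrow>
     (\<exists>r>0. \<exists>a::nat \<Rightarrow> real. \<forall>x. \<bar>x - x0\<bar> < r \<longrightarrow> (\<lambda>n. a n * (x - x0) ^ n) sums V x)"

definition separable_on :: "(real \<times> real) set \<Rightarrow> (real \<Rightarrow> real) \<Rightarrow> (real \<Rightarrow> real) \<Rightarrow> (real \<Rightarrow> real) \<Rightarrow> bool" where
  "separable_on D V F G \<longleftrightarrow>
     (\<forall>(u, v) \<in> D. V ((u + v) / 2) - V ((u - v) / 2) = F u * G v)"

end

theory Submission
  imports Defs "HOL-Complex_Analysis.Complex_Analysis"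
begin

text \<open>Expand V in its Taylor series about u/2 with increments v/2 and -v/2. In the difference
  the even terms cancel and the odd ones double; by hypothesis each odd derivative at u/2 is
  c m f(u), so the difference is f(u) times the series G(v). The Taylor expansion about u/2
  (not only about 0) is obtained by extending the real power series of V to a holomorphic function
  on a disc.\<close>

lemma real_power_series_holomorphic_extension:
  fixes a :: "nat \<Rightarrow> real"
  assumes power_series: "\<And>x. \<bar>x\<bar> < r \<Longrightarrow> (\<lambda>n. a n * x ^ n) sums V x"
  obtains g :: "complex \<Rightarrow> complex" where "g holomorphic_on ball 0 r"
    and "\<And>x. \<bar>x\<bar> < r \<Longrightarrow> g (of_real x) = of_real (V x)"
proof
  have of_real_sums: "(\<lambda>n. of_real (a n) * (of_real x :: complex) ^ n) sums of_real (V x)"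
    if "\<bar>x\<bar> < r" for x
    using sums_of_real[OF power_series[OF that], where 'a = complex]
    by (simp only: of_real_mult of_real_power)
  have summable: "summable (\<lambda>n. of_real (a n) * z ^ n)" if "norm z < r" for z :: complex
  proof -
    define x where "x = (norm z + r) / 2"
    have "0 < r"
      using that norm_ge_zero[of z] by linarith
    then have "0 < x" "norm z < x" "x < r"
      using that by (auto simp: x_def add_nonneg_pos)
    then have "\<bar>x\<bar> < r" "norm z < norm (of_real x :: complex)"
      by auto
    then show ?thesis
      by (intro powser_inside[OF sums_summable[OF of_real_sums]])
  qed
  show "(\<lambda>z. \<Sum>n. of_real (a n) * z ^ n) holomorphic_on ball 0 r"
    by (rule power_series_holomorphic[where a = "\<lambda>n. of_real (a n)"])
      (simp add: summable summable_sums)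
  show "(\<Sum>n. of_real (a n) * (of_real x :: complex) ^ n) = of_real (V x)" if "\<bar>x\<bar> < r" for x
    using of_real_sums[OF that] by (simp add: sums_iff)
qed

lemma higher_deriv_eq_Re_higher_deriv_extension:
  fixes V :: "real \<Rightarrow> real" and g :: "complex \<Rightarrow> complex"
  assumes holo: "g holomorphic_on ball 0 r"
    and ext: "\<And>x. \<bar>x\<bar> < r \<Longrightarrow> g (of_real x) = of_real (V x)"
    and x: "\<bar>x\<bar> < r"
  shows "(deriv ^^ n) V x = Re ((deriv ^^ n) g (of_real x))"
  using x
proof (induction n arbitrary: x)
  case 0
  then show ?case using ext by simp
next
  case (Suc n)
  have near: "\<forall>\<^sub>F y in nhds x. (deriv ^^ n) V y = Re ((deriv ^^ n) g (of_real y))"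
    using eventually_nhds_in_open[of "ball 0 r" x] Suc by (auto elim!: eventually_mono)
  have "((deriv ^^ n) g has_field_derivative (deriv ^^ Suc n) g (of_real x)) (at (of_real x))"
    using holomorphic_higher_deriv[OF holo] Suc.prems
    by (auto intro!: holomorphic_derivI[where S = "ball 0 r"])
  then have "((\<lambda>t. Re ((deriv ^^ n) g (of_real t))) has_real_derivative
               Re ((deriv ^^ Suc n) g (of_real x))) (at x)"
    by (intro has_field_derivative_Re has_vector_derivative_real_field)
  then show ?case
    using deriv_cong_ev[OF near refl] by (simp add: DERIV_imp_deriv)
qed

lemma Re_divide_fact_mult_of_real_power:
  "Re (z / fact n * of_real h ^ n) = Re z / fact n * h ^ n"
proof -
  have "z / fact n * of_real h ^ n = z * of_real (h ^ n) / of_real (fact n)"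
    by simp
  then show ?thesis
    by (simp only: Re_divide_of_real) simp
qed

lemma real_analytic_at_0_taylor_sums:
  assumes "real_analytic_at V 0"
  obtains r where "r > 0"
    and "\<And>w h. \<bar>w\<bar> + \<bar>h\<bar> < r \<Longrightarrow> (\<lambda>n. (deriv ^^ n) V w / fact n * h ^ n) sums V (w + h)"
proof -
  obtain r a where r: "r > 0" and power_series: "\<And>x. \<bar>x\<bar> < r \<Longrightarrow> (\<lambda>n. a n * x ^ n) sums V x"
    using assms unfolding real_analytic_at_def by auto
  obtain g where holo: "g holomorphic_on ball 0 r"
    and ext: "\<And>x. \<bar>x\<bar> < r \<Longrightarrow> g (of_real x) = of_real (V x)"
    using real_power_series_holomorphic_extension[OF power_series] by blast
  have "(\<lambda>n. (deriv ^^ n) V w / fact n * h ^ n) sums V (w + h)" if wh: "\<bar>w\<bar> + \<bar>h\<bar> < r" for w h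
  proof -
    have w: "\<bar>w\<bar> < r" and w_plus_h: "\<bar>w + h\<bar> < r"
      using wh abs_triangle_ineq[of w h] by linarith+
    have "ball (of_real w) (r - \<bar>w\<bar>) \<subseteq> ball (0::complex) r"
      by (simp add: ball_subset_ball_iff)
    moreover have "of_real (w + h) \<in> ball (of_real w :: complex) (r - \<bar>w\<bar>)"
      using wh by (simp add: dist_norm flip: of_real_diff)
    ultimately have "(\<lambda>n. (deriv ^^ n) g (of_real w) / fact n * (of_real (w + h) - of_real w) ^ n)
                       sums g (of_real (w + h))"
      by (rule holomorphic_power_series[OF holomorphic_on_subset[OF holo]])
    then have "(\<lambda>n. (deriv ^^ n) g (of_real w) / fact n * of_real h ^ n) sums g (of_real (w + h))"
      by simp
    then have "(\<lambda>n. Re ((deriv ^^ n) g (of_real w) / fact n * of_real h ^ n)) sums V (w + h)"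
      using sums_Re by (fastforce simp only: ext[OF w_plus_h] Re_complex_of_real)
    then show ?thesis
      by (simp only: Re_divide_fact_mult_of_real_power
          higher_deriv_eq_Re_higher_deriv_extension[OF holo ext w])
  qed
  with r that show ?thesis by blast
qed

lemma sums_odd_part:
  fixes d :: "nat \<Rightarrow> 'a::real_normed_algebra_1"
  assumes "(\<lambda>n. d n * h ^ n) sums A" and "(\<lambda>n. d n * (- h) ^ n) sums B"
  shows "(\<lambda>m. 2 * (d (2 * m + 1) * h ^ (2 * m + 1))) sums (A - B)"
proof -
  have "(\<lambda>n. d n * h ^ n - d n * (- h) ^ n) sums (A - B)"
    using sums_diff[OF assms] .
  moreover have "d n * h ^ n - d n * (- h) ^ n = 0" if "n \<notin> range (\<lambda>m. 2 * m + 1)" for n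
  proof -
    have "even n"
      using that by (metis oddE rangeI)
    then show ?thesis
      by simp
  qed
  ultimately have "(\<lambda>m. d (2 * m + 1) * h ^ (2 * m + 1) - d (2 * m + 1) * (- h) ^ (2 * m + 1)) sums (A - B)"
    using sums_mono_reindex[of "\<lambda>m. 2 * m + 1" "\<lambda>n. d n * h ^ n - d n * (- h) ^ n"]
    by (auto simp: strict_mono_def)
  moreover have "d (2 * m + 1) * h ^ (2 * m + 1) - d (2 * m + 1) * (- h) ^ (2 * m + 1)
                   = 2 * (d (2 * m + 1) * h ^ (2 * m + 1))" for m
    by (simp add: power_minus_odd mult_2 del: power_Suc)
  ultimately show ?thesis
    by simp
qed

lemma sums_mult_eq_mult_suminf:
  fixes g :: "nat \<Rightarrow> 'a::real_normed_field"
  assumes "(\<lambda>n. F * g n) sums S"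
  shows "S = F * suminf g"
proof (cases "F = 0")
  case True
  with assms have "(\<lambda>n. 0) sums S"
    by simp
  then show ?thesis
    using True sums_unique2[OF sums_zero] by simp
next
  case False
  then show ?thesis using sums_mult_D[OF assms] by (simp add: sums_iff)
qed

lemma odd_derivatives_separation:
  fixes V :: "real \<Rightarrow> real" and c :: "nat \<Rightarrow> real"
  assumes plus: "(\<lambda>n. (deriv ^^ n) V (u / 2) / fact n * (v / 2) ^ n) sums V ((u + v) / 2)"
    and minus: "(\<lambda>n. (deriv ^^ n) V (u / 2) / fact n * (- v / 2) ^ n) sums V ((u - v) / 2)"
    and odd: "\<And>m. (deriv ^^ (2 * m + 1)) V (u / 2) = c m * F"
  shows "V ((u + v) / 2) - V ((u - v) / 2)
           = F * (\<Sum>m. c m * v ^ (2 * m + 1) / (2 ^ (2 * m) * fact (2 * m + 1)))"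
proof (rule sums_mult_eq_mult_suminf)
  have "2 * ((deriv ^^ (2 * m + 1)) V (u / 2) / fact (2 * m + 1) * (v / 2) ^ (2 * m + 1))
          = F * (c m * v ^ (2 * m + 1) / (2 ^ (2 * m) * fact (2 * m + 1)))" for m
    unfolding odd by (simp add: power_divide ac_simps)
  then show "(\<lambda>m. F * (c m * v ^ (2 * m + 1) / (2 ^ (2 * m) * fact (2 * m + 1))))
               sums (V ((u + v) / 2) - V ((u - v) / 2))"
    using sums_odd_part[OF plus] minus by (simp del: power_Suc)
qed

theorem theorem2:
  fixes V f :: "real \<Rightarrow> real" and c :: "nat \<Rightarrow> real"
  assumes analytic: "real_analytic_at V 0"
    and derivs: "\<exists>\<epsilon>>0. \<forall>u. \<bar>u\<bar> < \<epsilon> \<longrightarrow>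
                   (\<forall>m::nat. (deriv ^^ (2 * m + 1)) V (u / 2) = c m * f u)"
    and conv: "\<exists>\<rho>>0. \<forall>v::real. \<bar>v\<bar> < \<rho> \<longrightarrow>
                 summable (\<lambda>m. c m * v ^ (2 * m + 1) / (2 ^ (2 * m) * fact (2 * m + 1)))"
  shows "\<exists>\<delta>>0. separable_on {(u, v). \<bar>u\<bar> < \<delta> \<and> \<bar>v\<bar> < \<delta>} V f
           (\<lambda>v. \<Sum>m. c m * v ^ (2 * m + 1) / (2 ^ (2 * m) * fact (2 * m + 1)))"
proof -
  obtain r where r: "r > 0" and taylor:
    "\<And>w h. \<bar>w\<bar> + \<bar>h\<bar> < r \<Longrightarrow> (\<lambda>n. (deriv ^^ n) V w / fact n * h ^ n) sums V (w + h)"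
    using real_analytic_at_0_taylor_sums[OF analytic] by blast
  obtain \<epsilon> where \<epsilon>: "\<epsilon> > 0"
    and odd: "\<And>u m. \<bar>u\<bar> < \<epsilon> \<Longrightarrow> (deriv ^^ (2 * m + 1)) V (u / 2) = c m * f u"
    using derivs by blast
  have "V ((u + v) / 2) - V ((u - v) / 2)
          = f u * (\<Sum>m. c m * v ^ (2 * m + 1) / (2 ^ (2 * m) * fact (2 * m + 1)))"
    if "\<bar>u\<bar> < min r \<epsilon>" "\<bar>v\<bar> < min r \<epsilon>" for u v
    using that taylor[of "u / 2" "v / 2"] taylor[of "u / 2" "- v / 2"]
    by (intro odd_derivatives_separation odd) (auto simp: add_divide_distrib diff_divide_distrib)
  then show ?thesis
    using r \<epsilon> unfolding separable_on_def by (intro exI[of _ "min r \<epsilon>"]) auto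
qed

end
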